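(* Let $T$ be a regular $n$-tournament with adjacency matrix $A$. Then for every $i\in[n]$, \[ P_A(z)=\tfrac12\left(z-\tfrac{n-1}{2}\right)\Big[(n+2z+1)\,P_{A_i}(z)+(n-2z-1)\,P_{A_i}(-z-1)\Big]. \]
   Context: An $n$-tournament is a digraph on $n$ vertices in which every pair of distinct vertices is joined by exactly one arc; its adjacency matrix $A=(a_{ij})$ has $a_{ij}=1$ if $v_i$ dominates $v_j$ and $0$ otherwise. A tournament is regular if all vertices have the same out-degree. $P_M(z)=\det(zI-M)$. $[n]=\{1,\dots,n\}$, and $A_i$ denotes the principal submatrix of $A$ obtained by deleting row and column $i$. *)

theory Defs
  imports "Jordan_Normal_Form.Char_Poly"
begin

definition tournament_matrix :: "nat \<Rightarrow> complex mat \<Rightarrow> bool" where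
  "tournament_matrix n A \<longleftrightarrow> A \<in> carrier_mat n n \<and>
     (\<forall>i<n. \<forall>j<n. A $$ (i,j) = 0 \<or> A $$ (i,j) = 1) \<and>
     (\<forall>i<n. A $$ (i,i) = 0) \<and>
     (\<forall>i<n. \<forall>j<n. i \<noteq> j \<longrightarrow> A $$ (i,j) + A $$ (j,i) = 1)"

definition regular_tournament_matrix :: "nat \<Rightarrow> complex mat \<Rightarrow> bool" where
  "regular_tournament_matrix n A \<longleftrightarrow> tournament_matrix n A \<and>
     (\<exists>k. \<forall>i<n. (\<Sum>j<n. A $$ (i,j)) = k)"

end

theory Submission
  imports Defs
begin

text \<open>
  For a regular tournament every out- and in-degree is (n-1)/2, so N = zI - A has all row and
  column sums equal to s = z - (n-1)/2. Replacing a row of N by the sum of all rows, and then a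
  column by the sum of all columns, expresses det N through the principal minor M = N_ii and
  the bordered matrix [[1, 1^T], [-1, M]], whose determinant is det (M + J) (J the all-ones
  matrix). This gives det N = s ((n + s) det M - s det (M + J)). Since A_i is again a tournament
  matrix, M + J = (z + 1) I + A_i^T, and as n - 1 is even, det (M + J) = P_{A_i}(-z-1).
\<close>

definition replace_row :: "'a mat \<Rightarrow> 'a vec \<Rightarrow> nat \<Rightarrow> 'a mat" where
  "replace_row A b k = mat (dim_row A) (dim_col A) (\<lambda>(i,j). if i = k then b $ j else A $$ (i,j))"

definition ones_mat :: "nat \<Rightarrow> 'a :: one mat" where
  "ones_mat n = mat n n (\<lambda>_. 1)"

abbreviation ones_vec :: "nat \<Rightarrow> 'a :: one vec" where
  "ones_vec n \<equiv> vec n (\<lambda>_. 1)"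

lemma replace_row_carrier [simp]: "A \<in> carrier_mat n n \<Longrightarrow> replace_row A b k \<in> carrier_mat n n"
  unfolding replace_row_def by auto

lemma replace_col_carrier [simp]: "A \<in> carrier_mat n n \<Longrightarrow> replace_col A b k \<in> carrier_mat n n"
  unfolding replace_col_def by auto

lemma transpose_replace_col: "transpose_mat (replace_col A b k) = replace_row (transpose_mat A) b k"
  unfolding replace_col_def replace_row_def by (rule eq_matI) auto

lemma mat_delete_replace_row: "k < dim_row A \<Longrightarrow> mat_delete (replace_row A b k) k j = mat_delete A k j"
  unfolding mat_delete_def replace_row_def by (rule eq_matI) auto

lemma mat_delete_replace_col: "k < dim_col A \<Longrightarrow> mat_delete (replace_col A b k) i k = mat_delete A i k"
  unfolding mat_delete_def replace_col_def by (rule eq_matI) auto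

lemma cofactor_diag: "cofactor A k k = det (mat_delete A k k)"
  unfolding cofactor_def by simp

lemma det_replace_row:
  fixes A :: "'a :: comm_ring_1 mat"
  assumes A: "A \<in> carrier_mat n n" and k: "k < n"
  shows "det (replace_row A b k) = (\<Sum>j<n. b $ j * cofactor A k j)"
proof -
  have "det (replace_row A b k)
      = (\<Sum>j<n. replace_row A b k $$ (k,j) * cofactor (replace_row A b k) k j)"
    by (rule laplace_expansion_row) (use A k in auto)
  also have "\<dots> = (\<Sum>j<n. b $ j * cofactor A k j)"
    using A k by (intro sum.cong refl)
      (auto simp: cofactor_def mat_delete_replace_row, simp add: replace_row_def)
  finally show ?thesis .
qed

lemma det_replace_col:
  fixes A :: "'a :: comm_ring_1 mat"
  assumes A: "A \<in> carrier_mat n n" and k: "k < n"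
  shows "det (replace_col A b k) = (\<Sum>i<n. b $ i * cofactor A i k)"
proof -
  have "det (replace_col A b k)
      = (\<Sum>i<n. replace_col A b k $$ (i,k) * cofactor (replace_col A b k) i k)"
    by (rule laplace_expansion_column) (use A k in auto)
  also have "\<dots> = (\<Sum>i<n. b $ i * cofactor A i k)"
    using A k by (intro sum.cong refl)
      (auto simp: cofactor_def mat_delete_replace_col, simp add: replace_col_def)
  finally show ?thesis .
qed

lemma det_replace_col_row_sums:
  fixes A :: "'a :: comm_ring_1 mat"
  assumes A: "A \<in> carrier_mat n n" and k: "k < n"
  shows "det (replace_col A (A *\<^sub>v ones_vec n) k) = det A"
  using cramer_lemma_mat[OF A _ k, of "ones_vec n"] k by simp

lemma det_replace_row_col_sums:
  fixes A :: "'a :: comm_ring_1 mat"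
  assumes A: "A \<in> carrier_mat n n" and k: "k < n"
  shows "det (replace_row A (transpose_mat A *\<^sub>v ones_vec n) k) = det A"
proof -
  have At: "transpose_mat A \<in> carrier_mat n n" using A by simp
  have "det (replace_row A (transpose_mat A *\<^sub>v ones_vec n) k)
      = det (transpose_mat (replace_col (transpose_mat A) (transpose_mat A *\<^sub>v ones_vec n) k))"
    by (simp add: transpose_replace_col)
  also have "\<dots> = det A"
    using det_transpose[OF replace_col_carrier[OF At]] det_replace_col_row_sums[OF At k]
      det_transpose[OF A] by simp
  finally show ?thesis .
qed

lemma det_unit_row:
  fixes A :: "'a :: comm_ring_1 mat"
  assumes A: "A \<in> carrier_mat n n" and k: "k < n"
    and row: "\<And>j. j < n \<Longrightarrow> A $$ (k,j) = (if j = k then 1 else 0)"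
  shows "det A = det (mat_delete A k k)"
proof -
  have "det A = (\<Sum>j<n. (if j = k then cofactor A k j else 0))"
    unfolding laplace_expansion_row[OF A k] by (rule sum.cong) (auto simp: row)
  then show ?thesis using k by (simp add: cofactor_diag)
qed

lemma det_unit_col:
  fixes A :: "'a :: comm_ring_1 mat"
  assumes A: "A \<in> carrier_mat n n" and k: "k < n"
    and col: "\<And>i. i < n \<Longrightarrow> A $$ (i,k) = (if i = k then 1 else 0)"
  shows "det A = det (mat_delete A k k)"
proof -
  have "det A = (\<Sum>i<n. (if i = k then cofactor A i k else 0))"
    unfolding laplace_expansion_column[OF A k] by (rule sum.cong) (auto simp: col)
  then show ?thesis using k by (simp add: cofactor_diag)
qed

lemma det_add_row_to_others:
  fixes A :: "'a :: comm_ring_1 mat"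
  assumes A: "A \<in> carrier_mat n n" and k: "k < n"
  shows "det (mat n n (\<lambda>(i,j). if i = k then A $$ (k,j) else A $$ (i,j) + c * A $$ (k,j))) = det A"
proof -
  define E where
    "E = mat n n (\<lambda>(i,j). (if i = j then 1 else 0) + (if j = k \<and> i \<noteq> k then c else 0))"
  have E: "E \<in> carrier_mat n n" unfolding E_def by simp
  have "mat n n (\<lambda>(i,j). if i = k then A $$ (k,j) else A $$ (i,j) + c * A $$ (k,j)) = E * A"
    (is "?R = _")
  proof (rule eq_matI)
    fix i j assume "i < dim_row (E * A)" "j < dim_col (E * A)"
    then have i: "i < n" and j: "j < n" using A E by auto
    have "(E * A) $$ (i,j)
        = (\<Sum>p<n. ((if i = p then 1 else 0) + (if p = k \<and> i \<noteq> k then c else 0)) * A $$ (p,j))"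
      using i j A unfolding E_def by (auto simp: scalar_prod_def lessThan_atLeast0 intro!: sum.cong)
    also have "\<dots> = A $$ (i,j) + (if i \<noteq> k then c * A $$ (k,j) else 0)"
      using i k by (simp add: distrib_right sum.distrib if_distrib[of "\<lambda>x. x * _"] cong: if_cong)
    finally show "?R $$ (i,j) = (E * A) $$ (i,j)" using i j by simp
  qed (use A E in auto)
  moreover have "det E = 1"
  proof -
    have "det E = det (mat_delete E k k)"
      by (rule det_unit_row[OF E k]) (use k in \<open>simp add: E_def\<close>)
    also have "mat_delete E k k = 1\<^sub>m (n - 1)"
      by (rule eq_matI) (auto simp: E_def mat_delete_def)
    finally show ?thesis by simp
  qed
  ultimately show ?thesis using det_mult[OF E A] by simp
qed

lemma det_const_col_sums_replace_row:
  fixes N :: "'a :: comm_ring_1 mat"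
  assumes N: "N \<in> carrier_mat n n" and k: "k < n"
    and cols: "\<And>j. j < n \<Longrightarrow> (\<Sum>i<n. N $$ (i,j)) = s"
  shows "det N = s * det (replace_row N (ones_vec n) k)"
proof -
  have "transpose_mat N *\<^sub>v ones_vec n = vec n (\<lambda>_. s)"
    using N cols by (intro eq_vecI) (auto simp: scalar_prod_def lessThan_atLeast0)
  then have "det N = det (replace_row N (vec n (\<lambda>_. s)) k)"
    using det_replace_row_col_sums[OF N k] by simp
  also have "\<dots> = s * det (replace_row N (ones_vec n) k)"
    using k by (simp add: det_replace_row[OF N k] sum_distrib_left)
  finally show ?thesis .
qed

text \<open>Replacing the border column by (1, -1, ..., -1) instead gives the matrix
  [[1, 1^T], [-1, M]] (border moved to position k), whose determinant is det (M + J): adding the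
  border row to every other row clears the border column.\<close>

lemma det_replace_col_ones_bordered:
  fixes Q :: "'a :: comm_ring_1 mat"
  assumes Q: "Q \<in> carrier_mat n n" and k: "k < n"
    and row: "\<And>j. j < n \<Longrightarrow> Q $$ (k,j) = 1"
  shows "det (replace_col Q (ones_vec n) k)
    = 2 * det (mat_delete Q k k) - det (mat_delete Q k k + ones_mat (n - 1))"
proof -
  define V where "V = replace_col Q (vec n (\<lambda>i. if i = k then 1 else -1)) k"
  define X where "X = mat n n (\<lambda>(i,j). if i = k then V $$ (k,j) else V $$ (i,j) + 1 * V $$ (k,j))"
  have V: "V \<in> carrier_mat n n" using Q unfolding V_def by simp
  have X: "X \<in> carrier_mat n n" unfolding X_def by simp
  have "det V = det X" unfolding X_def by (rule det_add_row_to_others[OF V k, symmetric])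
  also have "\<dots> = det (mat_delete X k k)"
    by (rule det_unit_col[OF X k]) (use Q k row in \<open>auto simp: X_def V_def replace_col_def\<close>)
  also have "mat_delete X k k = mat_delete Q k k + ones_mat (n - 1)"
    using Q k row
    by (intro eq_matI) (auto simp: X_def V_def replace_col_def mat_delete_def ones_mat_def)
  finally have det_V: "det V = det (mat_delete Q k k + ones_mat (n - 1))" .
  have "det V + det (replace_col Q (ones_vec n) k)
      = (\<Sum>i<n. if i = k then 2 * cofactor Q i k else 0)"
    unfolding V_def det_replace_col[OF Q k] sum.distrib[symmetric]
    by (intro sum.cong) auto
  also have "\<dots> = 2 * det (mat_delete Q k k)" using k by (simp add: cofactor_diag)
  finally show ?thesis unfolding det_V by (simp add: algebra_simps)
qed

lemma det_const_line_sums: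
  fixes N :: "'a :: comm_ring_1 mat"
  assumes N: "N \<in> carrier_mat n n" and k: "k < n"
    and rows: "\<And>i. i < n \<Longrightarrow> (\<Sum>j<n. N $$ (i,j)) = s"
    and cols: "\<And>j. j < n \<Longrightarrow> (\<Sum>i<n. N $$ (i,j)) = s"
  shows "det N = s * ((of_nat n + s) * det (mat_delete N k k)
    - s * det (mat_delete N k k + ones_mat (n - 1)))"
proof -
  define M where "M = mat_delete N k k"
  define Q where "Q = replace_row N (ones_vec n) k"
  define W where "W = replace_col Q (ones_vec n) k"
  have Q: "Q \<in> carrier_mat n n" using N unfolding Q_def by simp
  have delete_Q: "mat_delete Q k k = M"
    using N k unfolding Q_def M_def by (simp add: mat_delete_replace_row)
  have row_Q: "Q $$ (k,j) = 1" if "j < n" for j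
    using N k that unfolding Q_def replace_row_def by simp
  have "Q *\<^sub>v ones_vec n = vec n (\<lambda>i. if i = k then of_nat n else s)"
    using N rows
    by (intro eq_vecI) (auto simp: Q_def replace_row_def scalar_prod_def lessThan_atLeast0)
  then have "det Q = det (replace_col Q (vec n (\<lambda>i. if i = k then of_nat n else s)) k)"
    using det_replace_col_row_sums[OF Q k] by simp
  also have "\<dots> = (\<Sum>i<n. s * (1 * cofactor Q i k)
      + (if i = k then (of_nat n - s) * cofactor Q i k else 0))"
    unfolding det_replace_col[OF Q k] by (intro sum.cong) (auto simp: algebra_simps)
  also have "\<dots> = s * det W + (of_nat n - s) * det M"
    using k delete_Q unfolding W_def det_replace_col[OF Q k]
    by (simp add: sum.distrib sum_distrib_left cofactor_diag)
  also have "det W = 2 * det M - det (M + ones_mat (n - 1))"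
    using det_replace_col_ones_bordered[OF Q k row_Q] unfolding W_def delete_Q .
  finally have det_Q:
    "det Q = s * (2 * det M - det (M + ones_mat (n - 1))) + (of_nat n - s) * det M" .
  have "det N = s * det Q"
    unfolding Q_def by (rule det_const_col_sums_replace_row[OF N k cols])
  then show ?thesis unfolding det_Q M_def by (simp add: algebra_simps)
qed

lemma poly_char_poly:
  fixes A :: "'a :: comm_ring_1 mat"
  assumes A: "A \<in> carrier_mat n n"
  shows "poly (char_poly A) z = det (z \<cdot>\<^sub>m 1\<^sub>m n - A)"
  unfolding char_poly_def
  by (rule poly_det_cong[of _ n]) (use A in \<open>auto simp: char_poly_matrix_def\<close>)

lemma row_sum_char_matrix:
  fixes A :: "'a :: comm_ring_1 mat"
  assumes A: "A \<in> carrier_mat n n" and i: "i < n"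
  shows "(\<Sum>j<n. (z \<cdot>\<^sub>m 1\<^sub>m n - A) $$ (i,j)) = z - (\<Sum>j<n. A $$ (i,j))"
proof -
  have "(\<Sum>j<n. (z \<cdot>\<^sub>m 1\<^sub>m n - A) $$ (i,j)) = (\<Sum>j<n. (if j = i then z else 0) - A $$ (i,j))"
    using A i by (intro sum.cong) auto
  then show ?thesis using i by (simp add: sum_subtractf)
qed

lemma col_sum_char_matrix:
  fixes A :: "'a :: comm_ring_1 mat"
  assumes A: "A \<in> carrier_mat n n" and j: "j < n"
  shows "(\<Sum>i<n. (z \<cdot>\<^sub>m 1\<^sub>m n - A) $$ (i,j)) = z - (\<Sum>i<n. A $$ (i,j))"
proof -
  have "(\<Sum>i<n. (z \<cdot>\<^sub>m 1\<^sub>m n - A) $$ (i,j)) = (\<Sum>i<n. (if i = j then z else 0) - A $$ (i,j))"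
    using A j by (intro sum.cong) auto
  then show ?thesis using j by (simp add: sum_subtractf)
qed

lemma mat_delete_char_matrix:
  assumes A: "A \<in> carrier_mat n n" and k: "k < n"
  shows "mat_delete (z \<cdot>\<^sub>m 1\<^sub>m n - A) k k = z \<cdot>\<^sub>m 1\<^sub>m (n - 1) - mat_delete A k k"
  using A k by (intro eq_matI) (auto simp: mat_delete_def)

lemma tournament_mat_delete:
  assumes "tournament_matrix n A" and "k < n"
  shows "tournament_matrix (n - 1) (mat_delete A k k)"
proof -
  define f where "f a = (if a < k then a else Suc a)" for a
  have A: "A \<in> carrier_mat n n" using assms(1) unfolding tournament_matrix_def by simp
  have f: "f a < n" "f a = f b \<longleftrightarrow> a = b" if "a < n - 1" "b < n - 1" for a b
    using that assms(2) by (auto simp: f_def)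
  have entry: "mat_delete A k k $$ (a,b) = A $$ (f a, f b)" if "a < n - 1" "b < n - 1" for a b
    using that A by (simp add: mat_delete_def f_def)
  show ?thesis using assms(1) A unfolding tournament_matrix_def
    by (auto simp: entry f mat_delete_carrier)
qed

lemma tournament_in_out_degree:
  assumes T: "tournament_matrix n A" and j: "j < n"
  shows "(\<Sum>i<n. A $$ (i,j)) + (\<Sum>i<n. A $$ (j,i)) = of_nat n - 1"
proof -
  have "(\<Sum>i<n. A $$ (i,j)) + (\<Sum>i<n. A $$ (j,i)) = (\<Sum>i<n. 1 - (if i = j then 1 else 0))"
    unfolding sum.distrib[symmetric]
    by (rule sum.cong) (use T j in \<open>auto simp: tournament_matrix_def\<close>)
  also have "\<dots> = of_nat n - 1" using j by (simp add: sum_subtractf)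
  finally show ?thesis .
qed

lemma regular_tournament_out_degree:
  assumes R: "regular_tournament_matrix n A" and i: "i < n"
  shows "(\<Sum>j<n. A $$ (i,j)) = (of_nat n - 1) / 2"
proof -
  obtain k where T: "tournament_matrix n A" and out: "\<And>i. i < n \<Longrightarrow> (\<Sum>j<n. A $$ (i,j)) = k"
    using R unfolding regular_tournament_matrix_def by blast
  have "(\<Sum>i<n. A $$ (i,j)) = of_nat n - 1 - k" if "j < n" for j
    using tournament_in_out_degree[OF T that] out[OF that] by (simp add: algebra_simps)
  then have "of_nat n * (of_nat n - 1 - k) = (\<Sum>j<n. \<Sum>i<n. A $$ (i,j))" by simp
  also have "\<dots> = (\<Sum>i<n. \<Sum>j<n. A $$ (i,j))" by (rule sum.swap)
  also have "\<dots> = of_nat n * k" using out by simp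
  finally have "of_nat n - 1 - k = k" using i by simp
  then show ?thesis using out[OF i] by (simp add: field_simps)
qed

lemma regular_tournament_in_degree:
  assumes R: "regular_tournament_matrix n A" and j: "j < n"
  shows "(\<Sum>i<n. A $$ (i,j)) = (of_nat n - 1) / 2"
  using tournament_in_out_degree[OF _ j, of A] regular_tournament_out_degree[OF R j] R
  unfolding regular_tournament_matrix_def by (simp add: field_simps)

lemma regular_tournament_even_order:
  assumes R: "regular_tournament_matrix n A"
  shows "even (n - 1)"
proof (cases "n = 0")
  case False
  then have n: "0 < n" by simp
  have "(\<Sum>j<n. A $$ (0,j)) = (\<Sum>j<n. of_nat (if A $$ (0,j) = 1 then 1 else 0))"
    by (rule sum.cong) (use R n in \<open>auto simp: regular_tournament_matrix_def tournament_matrix_def\<close>)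
  then have "of_nat (n - 1) = (2 * of_nat (\<Sum>j<n. if A $$ (0,j) = 1 then 1 else 0) :: complex)"
    using regular_tournament_out_degree[OF R n] n by (simp add: of_nat_diff)
  then have "n - 1 = 2 * (\<Sum>j<n. if A $$ (0,j) = 1 then 1 else 0)"
    by (metis of_nat_eq_iff of_nat_mult of_nat_numeral)
  then show ?thesis by simp
qed simp

lemma tournament_det_char_matrix_plus_ones:
  assumes T: "tournament_matrix n B" and n: "even n"
  shows "det (z \<cdot>\<^sub>m 1\<^sub>m n - B + ones_mat n) = poly (char_poly B) (- z - 1)"
proof -
  have B: "B \<in> carrier_mat n n" using T unfolding tournament_matrix_def by simp
  have "z \<cdot>\<^sub>m 1\<^sub>m n - B + ones_mat n = (-1) \<cdot>\<^sub>m transpose_mat ((- z - 1) \<cdot>\<^sub>m 1\<^sub>m n - B)"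
    using T unfolding tournament_matrix_def
    by (intro eq_matI) (auto simp: ones_mat_def algebra_simps eq_diff_eq)
  then have "det (z \<cdot>\<^sub>m 1\<^sub>m n - B + ones_mat n) = det ((- z - 1) \<cdot>\<^sub>m 1\<^sub>m n - B)"
    using B n det_transpose[of "(- z - 1) \<cdot>\<^sub>m 1\<^sub>m n - B" n] by fastforce
  then show ?thesis using poly_char_poly[OF B] by simp
qed

theorem lemma4p2:
  fixes n :: nat and A :: "complex mat" and i :: nat and z :: complex
  assumes "regular_tournament_matrix n A" and "i < n"
  shows "poly (char_poly A) z =
    (1/2) * (z - (of_nat n - 1) / 2) *
      ((of_nat n + 2 * z + 1) * poly (char_poly (mat_delete A i i)) z
       + (of_nat n - 2 * z - 1) * poly (char_poly (mat_delete A i i)) (- z - 1))"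
proof -
  have T: "tournament_matrix n A" and A: "A \<in> carrier_mat n n"
    using assms(1) unfolding regular_tournament_matrix_def tournament_matrix_def by auto
  define s where "s = z - (of_nat n - 1) / 2"
  define N where "N = z \<cdot>\<^sub>m 1\<^sub>m n - A"
  define B where "B = mat_delete A i i"
  have N: "N \<in> carrier_mat n n" using A unfolding N_def by (simp add: minus_carrier_mat)
  have rows: "(\<Sum>j<n. N $$ (l,j)) = s" if "l < n" for l
    unfolding N_def s_def row_sum_char_matrix[OF A that]
    using regular_tournament_out_degree[OF assms(1) that] by simp
  have cols: "(\<Sum>l<n. N $$ (l,j)) = s" if "j < n" for j
    unfolding N_def s_def col_sum_char_matrix[OF A that]
    using regular_tournament_in_degree[OF assms(1) that] by simp
  have delete_N: "mat_delete N i i = z \<cdot>\<^sub>m 1\<^sub>m (n - 1) - B"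
    unfolding N_def B_def by (rule mat_delete_char_matrix[OF A assms(2)])
  have "poly (char_poly A) z = det N" unfolding N_def by (rule poly_char_poly[OF A])
  also have "\<dots> = s * ((of_nat n + s) * det (z \<cdot>\<^sub>m 1\<^sub>m (n - 1) - B)
      - s * det (z \<cdot>\<^sub>m 1\<^sub>m (n - 1) - B + ones_mat (n - 1)))"
    using det_const_line_sums[OF N assms(2) rows cols] unfolding delete_N .
  also have "\<dots> = s * ((of_nat n + s) * poly (char_poly B) z - s * poly (char_poly B) (- z - 1))"
    unfolding B_def
    using poly_char_poly[OF mat_delete_carrier[OF A], where z = z, symmetric]
      tournament_det_char_matrix_plus_ones[OF tournament_mat_delete[OF T assms(2)]
        regular_tournament_even_order[OF assms(1)]]
    by simp
  also have "\<dots> = (1/2) * s * ((of_nat n + 2 * z + 1) * poly (char_poly B) z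
      + (of_nat n - 2 * z - 1) * poly (char_poly B) (- z - 1))"
    unfolding s_def by (simp add: field_simps)
  finally show ?thesis unfolding s_def B_def .
qed

end
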